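(* Let $\gamma_n:[0,1]\to\mathbb{R}^d$ be curves in $W^{2,2}([0,1];\mathbb{R}^d)$, each with constant positive speed $|\gamma_n'|$, converging uniformly to a curve $\gamma:[0,1]\to\mathbb{R}^d$, and assume $$\sup_n|\gamma_n'|<+\infty,\qquad \sup_n\int_0^1|\kappa_{\gamma_n}|^2\,ds<+\infty.$$ Then $L(\gamma)=\lim_{n\to\infty}L(\gamma_n)$.
   Context: For a curve $\gamma$, $L(\gamma)$ denotes its length, i.e. its total variation $\sup\sum_j|\gamma(t_j)-\gamma(t_{j-1})|$ over partitions of $[0,1]$. For a constant-speed curve $\gamma_n$ with speed $|\gamma_n'|>0$, its curvature is $\kappa_{\gamma_n}=|\gamma_n'|^{-1}\frac{d}{ds}\big(\frac{\gamma_n'}{|\gamma_n'|}\big)=\gamma_n''/|\gamma_n'|^2$. *)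

theory Defs
  imports "HOL-Analysis.Analysis"
begin

definition curve_length :: "(real \<Rightarrow> 'a::real_normed_vector) \<Rightarrow> ereal" where
  "curve_length g =
     (SUP p \<in> {(m, t). t 0 = (0::real) \<and> t m = 1 \<and> (\<forall>j<m. t j \<le> t (Suc j))}.
        ereal (\<Sum>j<fst p. norm (g (snd p (Suc j)) - g (snd p j))))"

text \<open>g belongs to W^{2,2}([0,1]) (continuous representative), with first derivative g1
  and (weak, a.e.) second derivative g2: g is differentiable on [0,1] with derivative g1,
  g1 is the indefinite integral of g2, and g2 is square integrable.\<close>
definition W22_curve ::
  "(real \<Rightarrow> 'a::euclidean_space) \<Rightarrow> (real \<Rightarrow> 'a) \<Rightarrow> (real \<Rightarrow> 'a) \<Rightarrow> bool" where
  "W22_curve g g1 g2 \<longleftrightarrow>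
     (\<forall>t\<in>{0..1}. (g has_vector_derivative g1 t) (at t within {0..1})) \<and>
     g2 absolutely_integrable_on {0..1} \<and>
     (\<lambda>t. (norm (g2 t))\<^sup>2) integrable_on {0..1} \<and>
     (\<forall>t\<in>{0..1}. g1 t = g1 0 + integral {0..t} g2)"

definition curvature :: "(real \<Rightarrow> 'a::real_normed_vector) \<Rightarrow> (real \<Rightarrow> 'a) \<Rightarrow> real \<Rightarrow> 'a" where
  "curvature g1 g2 t = (1 / (norm (g1 t))\<^sup>2) *\<^sub>R g2 t"

text \<open>Elastic energy \<integral>|kappa|^2 ds with ds = |g'| dt.\<close>
definition elastic_energy :: "(real \<Rightarrow> 'a::real_normed_vector) \<Rightarrow> (real \<Rightarrow> 'a) \<Rightarrow> real" where
  "elastic_energy g1 g2 = integral {0..1} (\<lambda>t. (norm (curvature g1 g2 t))\<^sup>2 * norm (g1 t))"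

end

theory Submission
  imports Defs
begin

(* A W^{2,2} curve of constant speed c has length c, and since its derivative is 1/2-Hoelder
   with constant governed by the integral of |g''|^2, the chord sum over the uniform partition
   into m pieces falls short of c by at most O(m^(-1/2)) times that integral plus one.
   For the sequence, the integral of |g_n''|^2 equals c_n^3 times the elastic energy, so bounded
   speeds and energies make this error uniform in n.  Chord sums pass to the uniform limit, so
   every chord sum of the limit lies below liminf c_n, while the uniform chord sums of the limit
   stay within the uniform error of limsup c_n; the length of the limit is therefore lim c_n. *)

definition unit_partitions :: "(nat \<times> (nat \<Rightarrow> real)) set" where
  "unit_partitions = {(m, t). t 0 = 0 \<and> t m = 1 \<and> (\<forall>j<m. t j \<le> t (Suc j))}"

definition chord_sum :: "(real \<Rightarrow> 'a::real_normed_vector) \<Rightarrow> nat \<times> (nat \<Rightarrow> real) \<Rightarrow> real" where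
  "chord_sum g p = (\<Sum>j<fst p. norm (g (snd p (Suc j)) - g (snd p j)))"

definition uniform_partition :: "nat \<Rightarrow> nat \<times> (nat \<Rightarrow> real)" where
  "uniform_partition m = (m, \<lambda>j. real j / real m)"

lemma curve_length_eq_SUP_chord_sum:
  "curve_length g = (SUP p\<in>unit_partitions. ereal (chord_sum g p))"
  unfolding curve_length_def unit_partitions_def chord_sum_def ..

lemma unit_partition_points:
  assumes "(m, t) \<in> unit_partitions" and "j \<le> m"
  shows "t j \<in> {0..1}"
proof -
  have t: "t 0 = 0" "t m = 1" "\<And>i. i \<in> {..<m} \<Longrightarrow> t i \<le> t (Suc i)"
    using assms(1) unfolding unit_partitions_def by auto
  have "t 0 \<le> t j" "t j \<le> t m"
    by (rule lift_Suc_mono_le_ivl[of "{..<m}"]; use t assms(2) in auto)+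
  then show ?thesis using t by simp
qed

lemma uniform_partition_in_unit_partitions:
  "m > 0 \<Longrightarrow> uniform_partition m \<in> unit_partitions"
  unfolding uniform_partition_def unit_partitions_def by (auto simp: divide_right_mono)

lemma chord_sum_tendsto:
  assumes "\<And>t. t \<in> {0..1} \<Longrightarrow> (\<lambda>n. g n t) \<longlonglongrightarrow> h t" and "p \<in> unit_partitions"
  shows "(\<lambda>n. chord_sum (g n) p) \<longlonglongrightarrow> chord_sum h p"
proof -
  obtain m t where p: "p = (m, t)" by (cases p)
  have "(\<lambda>n. g n (t j)) \<longlonglongrightarrow> h (t j)" if "j \<le> m" for j
    using assms(2) unfolding p by (intro assms(1) unit_partition_points[OF _ that])
  then show ?thesis
    unfolding chord_sum_def p fst_conv snd_conv by (intro tendsto_intros) auto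
qed

lemma W22_curve_has_integral_derivative:
  assumes "W22_curve g g1 g2" and "0 \<le> a" "a \<le> b" "b \<le> 1"
  shows "(g1 has_integral (g b - g a)) {a..b}"
proof (rule fundamental_theorem_of_calculus[OF \<open>a \<le> b\<close>])
  fix x assume "x \<in> {a..b}"
  then have "x \<in> {0..1}" using assms by auto
  then have "(g has_vector_derivative g1 x) (at x within {0..1})"
    using assms(1) unfolding W22_curve_def by blast
  then show "(g has_vector_derivative g1 x) (at x within {a..b})"
    by (rule has_vector_derivative_within_subset) (use assms in auto)
qed

lemma W22_curve_derivative_oscillation:
  assumes W: "W22_curve g g1 g2" and a: "0 \<le> a" "a \<le> s" "s \<le> 1" "s - a \<le> h" "h > 0"
  shows "norm (g1 s - g1 a) \<le> sqrt h * (integral {0..1} (\<lambda>t. (norm (g2 t))\<^sup>2) + 1) / 2"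
proof -
  define Q where "Q = integral {0..1} (\<lambda>t. (norm (g2 t))\<^sup>2)"
  define r where "r = sqrt h"
  have r: "r > 0" "h = r * r" using a by (simp_all add: r_def)
  have ai: "g2 absolutely_integrable_on {0..1}"
    and sq: "(\<lambda>t. (norm (g2 t))\<^sup>2) integrable_on {0..1}"
    and rep: "\<forall>t\<in>{0..1}. g1 t = g1 0 + integral {0..t} g2"
    using W unfolding W22_curve_def by blast+
  have i2: "g2 integrable_on {0..1}" and in2: "(\<lambda>t. norm (g2 t)) integrable_on {0..1}"
    using ai by (auto simp: absolutely_integrable_on_def)
  have sub: "g2 integrable_on {a..s}" "(\<lambda>t. norm (g2 t)) integrable_on {a..s}"
    "(\<lambda>t. (norm (g2 t))\<^sup>2) integrable_on {a..s}" "g2 integrable_on {0..s}"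
    by (rule integrable_subinterval_real[OF i2] integrable_subinterval_real[OF in2]
         integrable_subinterval_real[OF sq]; use a in auto)+
  have amgm: "((\<lambda>t. (r/2) * (norm (g2 t))\<^sup>2 + 1/(2*r)) has_integral
      ((r/2) * integral {a..s} (\<lambda>t. (norm (g2 t))\<^sup>2) + (s - a) * (1/(2*r)))) {a..s}"
    using has_integral_add[OF has_integral_mult_right[OF integrable_integral[OF sub(3)], of "r/2"]
        has_integral_const_real[of "1/(2*r)" a s]] a
    by (simp del: times_divide_eq_left times_divide_eq_right)
  have "integral {0..s} g2 = integral {0..a} g2 + integral {a..s} g2"
    by (rule Henstock_Kurzweil_Integration.integral_combine[symmetric]) (use a sub in auto)
  moreover have "g1 s = g1 0 + integral {0..s} g2" "g1 a = g1 0 + integral {0..a} g2"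
    using bspec[OF rep, of s] bspec[OF rep, of a] a by simp_all
  ultimately have "g1 s - g1 a = integral {a..s} g2" by simp
  then have "norm (g1 s - g1 a) \<le> integral {a..s} (\<lambda>t. norm (g2 t))"
    using integral_norm_bound_integral[OF sub(1,2)] by simp
  \<comment> \<open>AM-GM with weight r = sqrt h takes the place of Cauchy-Schwarz\<close>
  also have "\<dots> \<le> integral {a..s} (\<lambda>t. (r/2) * (norm (g2 t))\<^sup>2 + 1/(2*r))"
  proof (rule integral_le[OF sub(2) has_integral_integrable[OF amgm]])
    fix t
    have "2 * r * norm (g2 t) \<le> r\<^sup>2 * (norm (g2 t))\<^sup>2 + 1"
      using sum_squares_ge_zero[of "r * norm (g2 t) - 1" 0] by (simp add: power2_eq_square algebra_simps)
    then show "norm (g2 t) \<le> (r/2) * (norm (g2 t))\<^sup>2 + 1/(2*r)"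
      using r by (simp add: field_simps power2_eq_square)
  qed
  also have "\<dots> = (r/2) * integral {a..s} (\<lambda>t. (norm (g2 t))\<^sup>2) + (s - a) * (1/(2*r))"
    by (rule integral_unique[OF amgm])
  also have "\<dots> \<le> (r/2) * Q + r/2"
  proof (rule add_mono)
    show "(r/2) * integral {a..s} (\<lambda>t. (norm (g2 t))\<^sup>2) \<le> (r/2) * Q"
      unfolding Q_def using r by (intro mult_left_mono integral_subset_le) (use a sub sq in auto)
    have "(s - a) * (1/(2*r)) \<le> h * (1/(2*r))" by (intro mult_right_mono) (use a r in auto)
    also have "h * (1/(2*r)) = r/2" using r by simp
    finally show "(s - a) * (1/(2*r)) \<le> r/2" .
  qed
  finally show ?thesis unfolding Q_def r_def by (simp add: algebra_simps)
qed

lemma constant_speed_chord_le: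
  assumes W: "W22_curve g g1 g2" and sp: "\<And>t. t \<in> {0..1} \<Longrightarrow> norm (g1 t) = c"
    and "c \<ge> 0" and a: "0 \<le> a" "a \<le> b" "b \<le> 1"
  shows "norm (g b - g a) \<le> c * (b - a)"
  by (rule has_integral_bound_real[OF \<open>c \<ge> 0\<close> finite.emptyI
        W22_curve_has_integral_derivative[OF W a], unfolded content_real[OF a(2)]])
    (use sp a in auto)

lemma constant_speed_chord_ge:
  assumes W: "W22_curve g g1 g2" and sp: "\<And>t. t \<in> {0..1} \<Longrightarrow> norm (g1 t) = c"
    and a: "0 \<le> a" "a \<le> b" "b \<le> 1" "b - a \<le> h" "h > 0"
  shows "(b - a) * (c - sqrt h * (integral {0..1} (\<lambda>t. (norm (g2 t))\<^sup>2) + 1) / 2)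
     \<le> norm (g b - g a)"
proof -
  define B where "B = sqrt h * (integral {0..1} (\<lambda>t. (norm (g2 t))\<^sup>2) + 1) / 2"
  have osc: "norm (g1 x - g1 a) \<le> B" if "x \<in> {a..b}" for x
    unfolding B_def by (rule W22_curve_derivative_oscillation[OF W]) (use a that in auto)
  have hi: "((\<lambda>s. g1 s - g1 a) has_integral ((g b - g a) - (b - a) *\<^sub>R g1 a)) {a..b}"
    using has_integral_diff[OF W22_curve_has_integral_derivative[OF W a(1-3)]
        has_integral_const_real[of "g1 a" a b]] a
    by simp
  have "norm ((g b - g a) - (b - a) *\<^sub>R g1 a) \<le> B * (b - a)"
    by (rule has_integral_bound_real[OF _ finite.emptyI hi, unfolded content_real[OF a(2)]])
      (use osc[of a] osc a in auto)
  moreover have "norm ((b - a) *\<^sub>R g1 a) = (b - a) * c" using sp a by simp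
  moreover have "norm ((b - a) *\<^sub>R g1 a) \<le> norm (g b - g a) + norm ((g b - g a) - (b - a) *\<^sub>R g1 a)"
    using norm_triangle_ineq4[of "g b - g a" "(g b - g a) - (b - a) *\<^sub>R g1 a"] by simp
  ultimately show ?thesis
    using a unfolding B_def[symmetric] by (simp add: right_diff_distrib mult.commute)
qed

lemma chord_sum_le_speed:
  assumes W: "W22_curve g g1 g2" and sp: "\<And>t. t \<in> {0..1} \<Longrightarrow> norm (g1 t) = c"
    and "c \<ge> 0" and p: "p \<in> unit_partitions"
  shows "chord_sum g p \<le> c"
proof -
  obtain m t where mt: "p = (m, t)" by (cases p)
  have t: "t 0 = 0" "t m = 1" "\<forall>j<m. t j \<le> t (Suc j)"
    using p unfolding mt unit_partitions_def by auto
  have "chord_sum g p \<le> (\<Sum>j<m. c * (t (Suc j) - t j))"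
    unfolding chord_sum_def mt fst_conv snd_conv
    by (intro sum_mono constant_speed_chord_le[OF W sp \<open>c \<ge> 0\<close>])
      (use t unit_partition_points[OF p[unfolded mt]] in auto)
  also have "\<dots> = c * (t m - t 0)"
    by (simp add: sum_distrib_left[symmetric] sum_lessThan_telescope)
  finally show ?thesis using t by simp
qed

lemma chord_sum_uniform_partition_ge:
  assumes W: "W22_curve g g1 g2" and sp: "\<And>t. t \<in> {0..1} \<Longrightarrow> norm (g1 t) = c"
    and A: "integral {0..1} (\<lambda>t. (norm (g2 t))\<^sup>2) \<le> A" and m: "m > 0"
  shows "c - sqrt (1 / real m) * ((A + 1) / 2) \<le> chord_sum g (uniform_partition m)"
proof -
  define B where "B = sqrt (1 / real m) * (integral {0..1} (\<lambda>t. (norm (g2 t))\<^sup>2) + 1) / 2"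
  have "c - sqrt (1 / real m) * ((A + 1) / 2) \<le> c - B"
    unfolding B_def using A by (simp add: mult_left_mono)
  also have "\<dots> = (\<Sum>j<m. (1 / real m) * (c - B))" using m by simp
  also have "\<dots> \<le> chord_sum g (uniform_partition m)"
    unfolding chord_sum_def uniform_partition_def fst_conv snd_conv
  proof (rule sum_mono)
    fix j assume j: "j \<in> {..<m}"
    have "real (Suc j) / real m - real j / real m = 1 / real m" using m by (simp add: field_simps)
    moreover have "real (Suc j) / real m \<le> 1" using j m by simp
    ultimately show "(1 / real m) * (c - B) \<le> norm (g (real (Suc j) / real m) - g (real j / real m))"
      using constant_speed_chord_ge[OF W sp, of "real j / real m" "real (Suc j) / real m" "1 / real m"] m
      unfolding B_def by (simp add: divide_right_mono)
  qed
  finally show ?thesis .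
qed

lemma constant_speed_integral_second_derivative_eq:
  assumes sp: "\<And>t. t \<in> {0..1} \<Longrightarrow> norm (g1 t) = c" and c: "c > 0"
  shows "integral {0..1} (\<lambda>t. (norm (g2 t))\<^sup>2) = c^3 * elastic_energy g1 g2"
proof -
  have "elastic_energy g1 g2 = integral {0..1} (\<lambda>t. (norm (g2 t))\<^sup>2 / c^3)"
    unfolding elastic_energy_def curvature_def
    by (rule integral_cong) (use sp c in \<open>auto simp: power2_eq_square power3_eq_cube field_simps\<close>)
  then show ?thesis using c by simp
qed

lemma constant_speed_integral_second_derivative_le:
  assumes W: "W22_curve g g1 g2" and sp: "\<And>t. t \<in> {0..1} \<Longrightarrow> norm (g1 t) = c"
    and "c > 0" "c \<le> M" and E: "elastic_energy g1 g2 \<le> E"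
  shows "integral {0..1} (\<lambda>t. (norm (g2 t))\<^sup>2) \<le> M^3 * E"
proof -
  have Q: "integral {0..1} (\<lambda>t. (norm (g2 t))\<^sup>2) = c^3 * elastic_energy g1 g2"
    by (rule constant_speed_integral_second_derivative_eq[OF sp \<open>c > 0\<close>])
  have "(\<lambda>t. (norm (g2 t))\<^sup>2) integrable_on {0..1}"
    using W unfolding W22_curve_def by blast
  then have "0 \<le> integral {0..1} (\<lambda>t. (norm (g2 t))\<^sup>2)" by (rule integral_nonneg) simp
  then have "0 \<le> elastic_energy g1 g2"
    using \<open>c > 0\<close> unfolding Q by (simp add: zero_le_mult_iff)
  then show ?thesis
    unfolding Q using assms by (intro mult_mono power_mono) auto
qed

lemma tendsto_sqrt_inverse_Suc_mult: "(\<lambda>m. sqrt (1 / real (Suc m)) * K) \<longlonglongrightarrow> 0"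
proof -
  have "(\<lambda>m. sqrt (1 / real (Suc m))) \<longlonglongrightarrow> sqrt 0"
    using tendsto_real_sqrt[OF lim_1_over_n] by (rule LIMSEQ_Suc)
  then show ?thesis using tendsto_mult_left_zero by force
qed

lemma tendsto_SUP_of_uniform_approximations:
  fixes S :: "nat \<Rightarrow> 'p \<Rightarrow> real" and S' :: "'p \<Rightarrow> real" and c \<delta> :: "nat \<Rightarrow> real"
  assumes lim: "\<And>p. p \<in> P \<Longrightarrow> (\<lambda>n. S n p) \<longlonglongrightarrow> S' p"
    and upper: "\<And>n p. p \<in> P \<Longrightarrow> S n p \<le> c n"
    and q: "\<And>m. q m \<in> P" and lower: "\<And>n m. c n - \<delta> m \<le> S n (q m)"
    and \<delta>: "\<delta> \<longlonglongrightarrow> 0"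
  shows "(\<lambda>n. ereal (c n)) \<longlonglongrightarrow> (SUP p\<in>P. ereal (S' p))"
proof -
  have S'_bound: "S' p \<le> S' (q 0) + \<delta> 0" if "p \<in> P" for p
  proof (rule LIMSEQ_le[OF lim[OF that] tendsto_add[OF lim[OF q[of 0]] tendsto_const]])
    show "\<exists>N. \<forall>n\<ge>N. S n p \<le> S n (q 0) + \<delta> 0"
      using upper[OF that] lower[of _ 0] by (metis add.commute diff_le_eq order_trans)
  qed
  obtain l where l: "(SUP p\<in>P. ereal (S' p)) = ereal l"
  proof -
    have "(SUP p\<in>P. ereal (S' p)) \<le> ereal (S' (q 0) + \<delta> 0)"
      using S'_bound by (auto intro: SUP_least)
    moreover have "ereal (S' (q 0)) \<le> (SUP p\<in>P. ereal (S' p))" by (rule SUP_upper[OF q])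
    ultimately show ?thesis using that by (cases "SUP p\<in>P. ereal (S' p)") auto
  qed
  have "c \<longlonglongrightarrow> l"
  proof (rule tendstoI)
    fix e :: real assume e: "e > 0"
    have "ereal (l - e/2) < (SUP p\<in>P. ereal (S' p))" using e l by simp
    then obtain p where p: "p \<in> P" "l - e/2 < S' p" by (auto simp: less_SUP_iff)
    have "\<forall>\<^sub>F n in sequentially. l - e < S n p"
      using order_tendstoD(1)[OF lim[OF p(1)], of "l - e"] p(2) e by simp
    then have above: "\<forall>\<^sub>F n in sequentially. l - e < c n"
      by (rule eventually_mono) (use upper[OF p(1)] order_less_le_trans in blast)
    obtain m where m: "\<delta> m < e/2"
      using order_tendstoD(2)[OF \<delta>, of "e/2"] e eventually_sequentially by force
    have "ereal (S' (q m)) \<le> ereal l" unfolding l[symmetric] by (rule SUP_upper[OF q])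
    then have "\<forall>\<^sub>F n in sequentially. S n (q m) < l + e/2"
      using order_tendstoD(2)[OF lim[OF q[of m]], of "l + e/2"] e by simp
    then have below: "\<forall>\<^sub>F n in sequentially. c n < l + e"
    proof (rule eventually_mono)
      fix n assume "S n (q m) < l + e/2"
      then show "c n < l + e" using lower[of n m] m by linarith
    qed
    show "\<forall>\<^sub>F n in sequentially. dist (c n) l < e"
      using eventually_conj[OF above below] by (rule eventually_mono) (auto simp: dist_real_def)
  qed
  then show ?thesis unfolding l by (simp add: tendsto_ereal)
qed

lemma curve_length_constant_speed:
  assumes W: "W22_curve g g1 g2" and sp: "\<And>t. t \<in> {0..1} \<Longrightarrow> norm (g1 t) = c" and "c \<ge> 0"
  shows "curve_length g = ereal c"
proof -
  define K where "K = (integral {0..1} (\<lambda>t. (norm (g2 t))\<^sup>2) + 1) / 2"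
  have "(\<lambda>n. ereal c) \<longlonglongrightarrow> curve_length g"
    unfolding curve_length_eq_SUP_chord_sum
  proof (rule tendsto_SUP_of_uniform_approximations[where q = "\<lambda>m. uniform_partition (Suc m)"
        and \<delta> = "\<lambda>m. sqrt (1 / real (Suc m)) * K"])
    show "c - sqrt (1 / real (Suc m)) * K \<le> chord_sum g (uniform_partition (Suc m))" for m
      unfolding K_def by (rule chord_sum_uniform_partition_ge[OF W sp order_refl]) simp_all
  qed (use chord_sum_le_speed[OF W sp \<open>c \<ge> 0\<close>] uniform_partition_in_unit_partitions
      tendsto_sqrt_inverse_Suc_mult in auto)
  then show ?thesis using LIMSEQ_unique tendsto_const by blast
qed

theorem lemma2p2:
  fixes \<gamma>s :: "nat \<Rightarrow> real \<Rightarrow> real ^ 'd"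
    and \<gamma>1 \<gamma>2 :: "nat \<Rightarrow> real \<Rightarrow> real ^ 'd"
    and \<gamma> :: "real \<Rightarrow> real ^ 'd"
    and c :: "nat \<Rightarrow> real"
  assumes W22: "\<And>n. W22_curve (\<gamma>s n) (\<gamma>1 n) (\<gamma>2 n)"
    and speed: "\<And>n t. t \<in> {0..1} \<Longrightarrow> norm (\<gamma>1 n t) = c n"
    and speed_pos: "\<And>n. c n > 0"
    and unif: "uniform_limit {0..1} \<gamma>s \<gamma> sequentially"
    and speed_bdd: "\<exists>M. \<forall>n. c n \<le> M"
    and energy_bdd: "\<exists>E. \<forall>n. elastic_energy (\<gamma>1 n) (\<gamma>2 n) \<le> E"
  shows "(\<lambda>n. curve_length (\<gamma>s n)) \<longlonglongrightarrow> curve_length \<gamma>"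
proof -
  obtain M where M: "\<And>n. c n \<le> M" using speed_bdd by blast
  obtain E where E: "\<And>n. elastic_energy (\<gamma>1 n) (\<gamma>2 n) \<le> E" using energy_bdd by blast
  define K where "K = (M^3 * E + 1) / 2"
  have lower: "c n - sqrt (1 / real (Suc m)) * K \<le> chord_sum (\<gamma>s n) (uniform_partition (Suc m))"
    for n m
    unfolding K_def
    by (rule chord_sum_uniform_partition_ge[OF W22 speed
          constant_speed_integral_second_derivative_le[OF W22 speed speed_pos M E]]) simp_all
  have "(\<lambda>n. ereal (c n)) \<longlonglongrightarrow> curve_length \<gamma>"
    unfolding curve_length_eq_SUP_chord_sum
  proof (rule tendsto_SUP_of_uniform_approximations[where q = "\<lambda>m. uniform_partition (Suc m)"
        and \<delta> = "\<lambda>m. sqrt (1 / real (Suc m)) * K", OF _ _ _ lower tendsto_sqrt_inverse_Suc_mult])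
    show "(\<lambda>n. chord_sum (\<gamma>s n) p) \<longlonglongrightarrow> chord_sum \<gamma> p" if "p \<in> unit_partitions" for p
      using tendsto_uniform_limitI[OF unif] that by (rule chord_sum_tendsto)
    show "chord_sum (\<gamma>s n) p \<le> c n" if "p \<in> unit_partitions" for n p
      by (rule chord_sum_le_speed[OF W22 speed less_imp_le[OF speed_pos] that])
    show "uniform_partition (Suc m) \<in> unit_partitions" for m
      by (simp add: uniform_partition_in_unit_partitions)
  qed
  moreover have "curve_length (\<gamma>s n) = ereal (c n)" for n
    by (rule curve_length_constant_speed[OF W22 speed less_imp_le[OF speed_pos]])
  ultimately show ?thesis by simp
qed

end
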